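(* Let $4\leq m\leq n$ be integers and suppose there exists a generalized quadrangle of order $(m,n)$. Let $m_1\leq n_1$ be integers with $3\le m_1\leq m$ and $n_1\leq n$. Then there exist $(m_1,n_1;8)$-bipartite biregular graphs of order $(m_1+n_1)mn$.
   Context: A generalized quadrangle is a finite point-line incidence geometry whose incidence (Levi) graph — the bipartite graph on points and lines with a point adjacent to a line iff incident — is connected, of diameter 4 and girth 8. It has order $(s,t)$ if each line has exactly $s+1$ points and each point lies on exactly $t+1$ lines. For integers $a,b\geq 2$ and even $g\ge4$, an $(a,b;g)$-bipartite biregular graph is a finite simple bipartite graph of girth exactly $g$ in which all vertices of one bipartition class have degree $a$ and all vertices of the other class have degree $b$. *)

theory Defs
  imports Main
begin

definition simple_graph :: "'v set \<Rightarrow> ('v \<Rightarrow> 'v \<Rightarrow> bool) \<Rightarrow> bool" where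
  "simple_graph V E \<longleftrightarrow> finite V \<and> (\<forall>u v. E u v \<longrightarrow> u \<in> V \<and> v \<in> V)
     \<and> (\<forall>u v. E u v \<longrightarrow> E v u) \<and> (\<forall>v. \<not> E v v)"

text \<open>A walk is a nonempty vertex list with consecutive vertices adjacent;
its length is the number of edges, i.e. length xs - 1.\<close>

definition is_walk :: "'v set \<Rightarrow> ('v \<Rightarrow> 'v \<Rightarrow> bool) \<Rightarrow> 'v list \<Rightarrow> bool" where
  "is_walk V E xs \<longleftrightarrow> xs \<noteq> [] \<and> set xs \<subseteq> V
     \<and> (\<forall>i. Suc i < length xs \<longrightarrow> E (xs ! i) (xs ! Suc i))"

definition dist_le :: "'v set \<Rightarrow> ('v \<Rightarrow> 'v \<Rightarrow> bool) \<Rightarrow> 'v \<Rightarrow> 'v \<Rightarrow> nat \<Rightarrow> bool" where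
  "dist_le V E u v k \<longleftrightarrow> (\<exists>xs. is_walk V E xs \<and> hd xs = u \<and> last xs = v \<and> length xs \<le> Suc k)"

definition connected_graph :: "'v set \<Rightarrow> ('v \<Rightarrow> 'v \<Rightarrow> bool) \<Rightarrow> bool" where
  "connected_graph V E \<longleftrightarrow> V \<noteq> {} \<and> (\<forall>u\<in>V. \<forall>v\<in>V. \<exists>k. dist_le V E u v k)"

definition has_diameter :: "'v set \<Rightarrow> ('v \<Rightarrow> 'v \<Rightarrow> bool) \<Rightarrow> nat \<Rightarrow> bool" where
  "has_diameter V E d \<longleftrightarrow> (\<forall>u\<in>V. \<forall>v\<in>V. dist_le V E u v d)
     \<and> (\<exists>u\<in>V. \<exists>v\<in>V. \<forall>k<d. \<not> dist_le V E u v k)"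

definition is_cycle :: "'v set \<Rightarrow> ('v \<Rightarrow> 'v \<Rightarrow> bool) \<Rightarrow> 'v list \<Rightarrow> bool" where
  "is_cycle V E xs \<longleftrightarrow> length xs \<ge> 3 \<and> distinct xs \<and> is_walk V E xs \<and> E (last xs) (hd xs)"

definition has_girth :: "'v set \<Rightarrow> ('v \<Rightarrow> 'v \<Rightarrow> bool) \<Rightarrow> nat \<Rightarrow> bool" where
  "has_girth V E g \<longleftrightarrow> (\<exists>xs. is_cycle V E xs \<and> length xs = g)
     \<and> (\<forall>xs. is_cycle V E xs \<longrightarrow> g \<le> length xs)"

definition degree :: "'v set \<Rightarrow> ('v \<Rightarrow> 'v \<Rightarrow> bool) \<Rightarrow> 'v \<Rightarrow> nat" where
  "degree V E v = card {u \<in> V. E v u}"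

definition levi_vertices :: "'p set \<Rightarrow> 'l set \<Rightarrow> ('p + 'l) set" where
  "levi_vertices P L = Inl ` P \<union> Inr ` L"

fun levi_adj :: "'p set \<Rightarrow> 'l set \<Rightarrow> ('p \<Rightarrow> 'l \<Rightarrow> bool) \<Rightarrow> 'p + 'l \<Rightarrow> 'p + 'l \<Rightarrow> bool" where
  "levi_adj P L I (Inl p) (Inr l) = (p \<in> P \<and> l \<in> L \<and> I p l)"
| "levi_adj P L I (Inr l) (Inl p) = (p \<in> P \<and> l \<in> L \<and> I p l)"
| "levi_adj P L I _ _ = False"

definition generalized_quadrangle :: "'p set \<Rightarrow> 'l set \<Rightarrow> ('p \<Rightarrow> 'l \<Rightarrow> bool) \<Rightarrow> bool" where
  "generalized_quadrangle P L I \<longleftrightarrow> finite P \<and> finite L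
     \<and> connected_graph (levi_vertices P L) (levi_adj P L I)
     \<and> has_diameter (levi_vertices P L) (levi_adj P L I) 4
     \<and> has_girth (levi_vertices P L) (levi_adj P L I) 8"

definition gq_order :: "'p set \<Rightarrow> 'l set \<Rightarrow> ('p \<Rightarrow> 'l \<Rightarrow> bool) \<Rightarrow> nat \<Rightarrow> nat \<Rightarrow> bool" where
  "gq_order P L I s t \<longleftrightarrow> generalized_quadrangle P L I
     \<and> (\<forall>l\<in>L. card {p \<in> P. I p l} = s + 1)
     \<and> (\<forall>p\<in>P. card {l \<in> L. I p l} = t + 1)"

definition bipartite_biregular :: "'v set \<Rightarrow> ('v \<Rightarrow> 'v \<Rightarrow> bool) \<Rightarrow> nat \<Rightarrow> nat \<Rightarrow> nat \<Rightarrow> bool" where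
  "bipartite_biregular V E a b g \<longleftrightarrow> a \<ge> 2 \<and> b \<ge> 2 \<and> even g \<and> g \<ge> 4
     \<and> simple_graph V E
     \<and> (\<exists>A B. A \<inter> B = {} \<and> A \<union> B = V
          \<and> (\<forall>u v. E u v \<longrightarrow> (u \<in> A \<and> v \<in> B) \<or> (u \<in> B \<and> v \<in> A))
          \<and> (\<forall>v\<in>A. degree V E v = a) \<and> (\<forall>v\<in>B. degree V E v = b))
     \<and> has_girth V E g"

end

theory Submission
  imports Defs
begin

text \<open>
  Fix a flag (p, l). A point q not collinear with p has a unique projection onto l, i.e. a
  unique point of l collinear with q, and dually a line k missing l has a unique projection onto p.
  Choose a set S of m1 points of l other than p and a set T of n1 lines through p other
  than l, and keep the points opposite p projecting into S and the lines missing l projecting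
  into T. Every y in S is the projection of exactly n m points, and a kept line contains exactly
  one point projecting to each y in S (dually for kept points), so the induced incidence graph is
  (m1, n1)-biregular on (m1 + n1) m n vertices. Its girth is at least that of the quadrangle,
  namely 8, and S and T can be taken to contain the projections of an explicit ordinary
  quadrangle whose points use only three projections onto l and whose lines only three
  projections onto p.
\<close>

section \<open>Graphs and their relabellings\<close>

lemma is_cycle_mono:
  assumes "is_cycle V E xs" "V \<subseteq> V'" "\<And>u v. E u v \<Longrightarrow> E' u v"
  shows "is_cycle V' E' xs"
  using assms unfolding is_cycle_def is_walk_def by blast

lemma is_cycle_map:
  assumes "is_cycle V E xs" "inj_on h V" "h ` V \<subseteq> V'"
    and "\<And>u v. u \<in> V \<Longrightarrow> v \<in> V \<Longrightarrow> E u v \<Longrightarrow> E' (h u) (h v)"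
  shows "is_cycle V' E' (map h xs)"
proof -
  have xs: "xs \<noteq> []" "set xs \<subseteq> V" using assms(1) by (auto simp: is_cycle_def is_walk_def)
  then have "inj_on h (set xs)" using assms(2) inj_on_subset by blast
  with assms xs show ?thesis
    by (auto simp: is_cycle_def is_walk_def distinct_map hd_map last_map subset_iff)
qed

definition pullback_graph :: "'v set \<Rightarrow> ('v \<Rightarrow> 'w) \<Rightarrow> ('w \<Rightarrow> 'w \<Rightarrow> bool) \<Rightarrow> 'v \<Rightarrow> 'v \<Rightarrow> bool" where
  "pullback_graph V g E u v \<longleftrightarrow> u \<in> V \<and> v \<in> V \<and> E (g u) (g v)"

lemma degree_pullback_graph:
  assumes "bij_betw g V X" "v \<in> V"
  shows "degree V (pullback_graph V g E) v = degree X E (g v)"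
proof -
  have "g ` {u \<in> V. pullback_graph V g E v u} = {x \<in> X. E (g v) x}"
    using assms by (auto simp: pullback_graph_def bij_betw_def)
  moreover have "inj_on g {u \<in> V. pullback_graph V g E v u}"
    using assms(1) by (auto simp: bij_betw_def intro: inj_on_subset)
  ultimately show ?thesis unfolding degree_def by (metis card_image)
qed

lemma has_girth_pullback_graph:
  assumes g: "bij_betw g V X" and girth: "has_girth X E c"
  shows "has_girth V (pullback_graph V g E) c"
proof -
  define h where "h = inv_into V g"
  have h: "bij_betw h X V" unfolding h_def using g by (rule bij_betw_inv_into)
  have "pullback_graph V g E (h x) (h y) \<longleftrightarrow> E x y" if "x \<in> X" "y \<in> X" for x y
    using that g h unfolding h_def
    by (auto simp: pullback_graph_def bij_betw_def bij_betw_inv_into_right)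
  moreover obtain xs where xs: "is_cycle X E xs" "length xs = c"
    using girth by (auto simp: has_girth_def)
  ultimately have "is_cycle V (pullback_graph V g E) (map h xs)"
    using h by (intro is_cycle_map[OF xs(1)]) (auto simp: bij_betw_def)
  moreover have "c \<le> length ys" if "is_cycle V (pullback_graph V g E) ys" for ys
  proof -
    have "is_cycle X E (map g ys)"
      using g by (intro is_cycle_map[OF that]) (auto simp: bij_betw_def pullback_graph_def)
    then show ?thesis using girth by (auto simp: has_girth_def)
  qed
  ultimately show ?thesis using xs(2) by (auto simp: has_girth_def)
qed

lemma bipartite_biregular_pullback_graph:
  assumes g: "bij_betw g V X" and bb: "bipartite_biregular X E a b c"
  shows "bipartite_biregular V (pullback_graph V g E) a b c"
proof -
  obtain A B where AB: "A \<inter> B = {}" "A \<union> B = X"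
    "\<forall>u v. E u v \<longrightarrow> (u \<in> A \<and> v \<in> B) \<or> (u \<in> B \<and> v \<in> A)"
    "\<forall>v\<in>A. degree X E v = a" "\<forall>v\<in>B. degree X E v = b"
    using bb unfolding bipartite_biregular_def by blast
  have "simple_graph V (pullback_graph V g E)"
    using bb g
    by (auto simp: bipartite_biregular_def simple_graph_def pullback_graph_def bij_betw_finite)
  moreover have "\<exists>A B. A \<inter> B = {} \<and> A \<union> B = V
      \<and> (\<forall>u v. pullback_graph V g E u v \<longrightarrow> (u \<in> A \<and> v \<in> B) \<or> (u \<in> B \<and> v \<in> A))
      \<and> (\<forall>v\<in>A. degree V (pullback_graph V g E) v = a)
      \<and> (\<forall>v\<in>B. degree V (pullback_graph V g E) v = b)"
    by (rule exI[of _ "{v \<in> V. g v \<in> A}"], rule exI[of _ "{v \<in> V. g v \<in> B}"])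
      (use AB g degree_pullback_graph[OF g] in \<open>auto simp: pullback_graph_def bij_betw_def\<close>)
  moreover have "has_girth V (pullback_graph V g E) c"
    using bb by (intro has_girth_pullback_graph[OF g]) (simp add: bipartite_biregular_def)
  ultimately show ?thesis using bb by (simp add: bipartite_biregular_def)
qed

lemma bipartite_biregular_nat_copy:
  assumes "bipartite_biregular (X :: 'v set) E a b c"
  shows "\<exists>(V :: nat set) E'. bipartite_biregular V E' a b c \<and> card V = card X"
proof -
  have "finite X" using assms by (simp add: bipartite_biregular_def simple_graph_def)
  then obtain g where "bij_betw g {0..<card X} X" using ex_bij_betw_nat_finite by blast
  then show ?thesis using assms bipartite_biregular_pullback_graph by fastforce
qed

section \<open>Incidence graphs\<close>

lemma levi_adj_sym: "levi_adj P L I u v = levi_adj P L I v u"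
  by (cases u; cases v) auto

lemma levi_adj_irrefl: "\<not> levi_adj P L I u u"
  by (cases u) auto

lemma levi_adj_mono: "levi_adj A B I u v \<Longrightarrow> A \<subseteq> P \<Longrightarrow> B \<subseteq> L \<Longrightarrow> levi_adj P L I u v"
  by (cases u; cases v) auto

lemma card_levi_vertices:
  "finite A \<Longrightarrow> finite B \<Longrightarrow> card (levi_vertices A B) = card A + card B"
  unfolding levi_vertices_def by (subst card_Un_disjoint) (auto simp: card_image)

lemma degree_levi_Inl:
  "degree (levi_vertices A B) (levi_adj A B I) (Inl q) = (if q \<in> A then card {k \<in> B. I q k} else 0)"
proof -
  have "{u \<in> levi_vertices A B. levi_adj A B I (Inl q) u} = Inr ` {k \<in> B. q \<in> A \<and> I q k}"
    by (auto simp: levi_vertices_def elim: levi_adj.elims)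
  then show ?thesis by (simp add: degree_def card_image)
qed

lemma degree_levi_Inr:
  "degree (levi_vertices A B) (levi_adj A B I) (Inr k) = (if k \<in> B then card {q \<in> A. I q k} else 0)"
proof -
  have "{u \<in> levi_vertices A B. levi_adj A B I (Inr k) u} = Inl ` {q \<in> A. k \<in> B \<and> I q k}"
    by (auto simp: levi_vertices_def elim: levi_adj.elims)
  then show ?thesis by (simp add: degree_def card_image)
qed

lemma levi_quadrangle_is_cycle:
  assumes "distinct [q1, q2, q3, q4]" "distinct [k1, k2, k3, k4]"
    and "{q1, q2, q3, q4} \<subseteq> A" "{k1, k2, k3, k4} \<subseteq> B"
    and "I q1 k1" "I q2 k1" "I q2 k2" "I q3 k2" "I q3 k3" "I q4 k3" "I q4 k4" "I q1 k4"
  shows "is_cycle (levi_vertices A B) (levi_adj A B I)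
    [Inl q1, Inr k1, Inl q2, Inr k2, Inl q3, Inr k3, Inl q4, Inr k4]"
  using assms by (auto simp: is_cycle_def is_walk_def levi_vertices_def less_Suc_eq numeral_eq_Suc)

lemma levi_bipartite_biregular:
  assumes "finite A" "finite B" "2 \<le> a" "2 \<le> b"
    and "\<And>k. k \<in> B \<Longrightarrow> card {q \<in> A. I q k} = a"
    and "\<And>q. q \<in> A \<Longrightarrow> card {k \<in> B. I q k} = b"
    and "has_girth (levi_vertices A B) (levi_adj A B I) g" "even g" "4 \<le> g"
  shows "bipartite_biregular (levi_vertices A B) (levi_adj A B I) a b g"
  unfolding bipartite_biregular_def
proof (intro conjI)
  show "simple_graph (levi_vertices A B) (levi_adj A B I)"
    using assms(1,2) unfolding simple_graph_def
    by (auto simp: levi_adj_sym levi_adj_irrefl levi_vertices_def elim: levi_adj.elims)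
  show "\<exists>A' B'. A' \<inter> B' = {} \<and> A' \<union> B' = levi_vertices A B
      \<and> (\<forall>u v. levi_adj A B I u v \<longrightarrow> (u \<in> A' \<and> v \<in> B') \<or> (u \<in> B' \<and> v \<in> A'))
      \<and> (\<forall>v\<in>A'. degree (levi_vertices A B) (levi_adj A B I) v = a)
      \<and> (\<forall>v\<in>B'. degree (levi_vertices A B) (levi_adj A B I) v = b)"
    by (rule exI[of _ "Inr ` B"], rule exI[of _ "Inl ` A"])
      (use assms(5,6) in \<open>simp add: degree_levi_Inl degree_levi_Inr,
        auto simp: levi_vertices_def elim: levi_adj.elims\<close>)
qed (use assms in auto)

lemma levi_subgeometry_girth_8:
  assumes girth: "\<forall>xs. is_cycle (levi_vertices P L) (levi_adj P L I) xs \<longrightarrow> 8 \<le> length xs"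
    and AP: "A \<subseteq> P" and BL: "B \<subseteq> L"
    and "distinct [q1, q2, q3, q4]" "distinct [k1, k2, k3, k4]"
    and "{q1, q2, q3, q4} \<subseteq> A" "{k1, k2, k3, k4} \<subseteq> B"
    and "I q1 k1" "I q2 k1" "I q2 k2" "I q3 k2" "I q3 k3" "I q4 k3" "I q4 k4" "I q1 k4"
  shows "has_girth (levi_vertices A B) (levi_adj A B I) 8"
  unfolding has_girth_def
proof (intro conjI allI impI)
  have "is_cycle (levi_vertices A B) (levi_adj A B I)
      [Inl q1, Inr k1, Inl q2, Inr k2, Inl q3, Inr k3, Inl q4, Inr k4]"
    by (rule levi_quadrangle_is_cycle) (fact assms)+
  then show "\<exists>xs. is_cycle (levi_vertices A B) (levi_adj A B I) xs \<and> length xs = 8"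
    by (intro exI[of _ "[Inl q1, Inr k1, Inl q2, Inr k2, Inl q3, Inr k3, Inl q4, Inr k4]"]) simp
next
  fix xs
  assume cycle: "is_cycle (levi_vertices A B) (levi_adj A B I) xs"
  have "levi_vertices A B \<subseteq> levi_vertices P L"
    using AP BL by (auto simp: levi_vertices_def)
  then have "is_cycle (levi_vertices P L) (levi_adj P L I) xs"
    by (rule is_cycle_mono[OF cycle _ levi_adj_mono[OF _ AP BL]])
  then show "8 \<le> length xs" using girth by blast
qed

section \<open>Generalized quadrangles as incidence structures\<close>

definition incident :: "'p set \<Rightarrow> 'l set \<Rightarrow> ('p \<Rightarrow> 'l \<Rightarrow> bool) \<Rightarrow> 'p \<Rightarrow> 'l \<Rightarrow> bool" where
  "incident P L I x k \<longleftrightarrow> x \<in> P \<and> k \<in> L \<and> I x k"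

definition collinear :: "'p set \<Rightarrow> 'l set \<Rightarrow> ('p \<Rightarrow> 'l \<Rightarrow> bool) \<Rightarrow> 'p \<Rightarrow> 'p \<Rightarrow> bool" where
  "collinear P L I a b \<longleftrightarrow> (\<exists>k. incident P L I a k \<and> incident P L I b k)"

definition concurrent :: "'p set \<Rightarrow> 'l set \<Rightarrow> ('p \<Rightarrow> 'l \<Rightarrow> bool) \<Rightarrow> 'l \<Rightarrow> 'l \<Rightarrow> bool" where
  "concurrent P L I k k' \<longleftrightarrow> (\<exists>x. incident P L I x k \<and> incident P L I x k')"

lemma collinear_sym: "collinear P L I a b = collinear P L I b a"
  by (auto simp: collinear_def)

lemma levi_walk_point_line:
  assumes "is_walk (levi_vertices P L) (levi_adj P L I) xs" "hd xs = Inl x" "last xs = Inr k"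
    and "length xs \<le> 5"
  shows "\<exists>k' y. incident P L I x k' \<and> incident P L I y k' \<and> incident P L I y k"
proof -
  have "xs \<noteq> []" using assms(1) by (simp add: is_walk_def)
  then consider a where "xs = [a]" | a b where "xs = [a, b]" | a b c where "xs = [a, b, c]"
    | a b c d where "xs = [a, b, c, d]" | a b c d e where "xs = [a, b, c, d, e]"
    using assms(4) by (auto simp: length_Suc_conv le_Suc_eq numeral_eq_Suc)
  then show ?thesis
  proof cases
    case (3 a b c)
    then show ?thesis using assms(1-3)
      by (cases b) (auto simp: is_walk_def less_Suc_eq numeral_eq_Suc)
  next
    case (4 a b c d)
    then show ?thesis using assms(1-3)
      by (cases b; cases c) (auto simp: is_walk_def incident_def less_Suc_eq numeral_eq_Suc)
  next
    case (5 a b c d e)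
    then show ?thesis using assms(1-3)
      by (cases b; cases c; cases d)
        (auto simp: is_walk_def incident_def less_Suc_eq numeral_eq_Suc)
  qed (use assms(1-3) in
    \<open>auto simp: is_walk_def incident_def less_Suc_eq numeral_eq_Suc elim: levi_adj.elims\<close>)
qed

locale gen_quadrangle =
  fixes P :: "'p set" and L :: "'l set" and I :: "'p \<Rightarrow> 'l \<Rightarrow> bool" and m n :: nat
  assumes finite_points: "finite P" and finite_lines: "finite L"
    and no_digon: "\<And>a b k k'. \<lbrakk>a \<noteq> b; k \<noteq> k'; incident P L I a k; incident P L I b k;
      incident P L I a k'\<rbrakk> \<Longrightarrow> \<not> incident P L I b k'"
    and no_triangle: "\<And>a b c K1 K2 K3. \<lbrakk>a \<noteq> b; b \<noteq> c; a \<noteq> c; K1 \<noteq> K2; K2 \<noteq> K3; K1 \<noteq> K3;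
      incident P L I a K1; incident P L I b K1; incident P L I b K2; incident P L I c K2;
      incident P L I c K3\<rbrakk> \<Longrightarrow> \<not> incident P L I a K3"
    and projection: "\<And>x k. \<lbrakk>x \<in> P; k \<in> L; \<not> incident P L I x k\<rbrakk>
      \<Longrightarrow> \<exists>k' y. incident P L I x k' \<and> incident P L I y k' \<and> incident P L I y k"
    and line_size: "\<And>k. k \<in> L \<Longrightarrow> card {x \<in> P. I x k} = m + 1"
    and point_degree: "\<And>x. x \<in> P \<Longrightarrow> card {k \<in> L. I x k} = n + 1"

lemma gq_order_imp_gen_quadrangle:
  assumes "gq_order P L I m n"
  shows "gen_quadrangle P L I m n"
proof -
  let ?V = "levi_vertices P L" and ?E = "levi_adj P L I"
  have girth: "\<forall>xs. is_cycle ?V ?E xs \<longrightarrow> 8 \<le> length xs" and diameter: "has_diameter ?V ?E 4"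
    using assms by (auto simp: gq_order_def generalized_quadrangle_def has_girth_def)
  show ?thesis
  proof
    fix a b k k'
    assume "a \<noteq> b" "k \<noteq> k'" "incident P L I a k" "incident P L I b k" "incident P L I a k'"
    then show "\<not> incident P L I b k'"
      using girth[rule_format, of "[Inl a, Inr k, Inl b, Inr k']"]
      by (auto simp: is_cycle_def is_walk_def levi_vertices_def incident_def less_Suc_eq
        numeral_eq_Suc)
  next
    fix a b c K1 K2 K3
    assume "a \<noteq> b" "b \<noteq> c" "a \<noteq> c" "K1 \<noteq> K2" "K2 \<noteq> K3" "K1 \<noteq> K3"
      "incident P L I a K1" "incident P L I b K1" "incident P L I b K2" "incident P L I c K2"
      "incident P L I c K3"
    then show "\<not> incident P L I a K3"
      using girth[rule_format, of "[Inl a, Inr K1, Inl b, Inr K2, Inl c, Inr K3]"]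
      by (auto simp: is_cycle_def is_walk_def levi_vertices_def incident_def less_Suc_eq
        numeral_eq_Suc)
  next
    fix x k
    assume "x \<in> P" "k \<in> L" "\<not> incident P L I x k"
    then have "dist_le ?V ?E (Inl x) (Inr k) 4"
      using diameter by (auto simp: has_diameter_def levi_vertices_def)
    then show "\<exists>k' y. incident P L I x k' \<and> incident P L I y k' \<and> incident P L I y k"
      unfolding dist_le_def using levi_walk_point_line by fastforce
  qed (use assms in \<open>auto simp: gq_order_def generalized_quadrangle_def\<close>)
qed

text \<open>
  The dual incidence is written as a lambda term so that dualizing twice is the original
  geometry up to beta-eta conversion; this is what lets the sublocale relation terminate.
\<close>

sublocale gen_quadrangle \<subseteq> dual: gen_quadrangle L P "\<lambda>k x. I x k" n m
proof
  fix a b k k'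
  assume "a \<noteq> b" "k \<noteq> k'" "incident L P (\<lambda>k x. I x k) a k" "incident L P (\<lambda>k x. I x k) b k"
    "incident L P (\<lambda>k x. I x k) a k'"
  then show "\<not> incident L P (\<lambda>k x. I x k) b k'" using no_digon[of k k' a b]
    by (auto simp: incident_def)
next
  fix a b c K1 K2 K3
  assume "a \<noteq> b" "b \<noteq> c" "a \<noteq> c" "K1 \<noteq> K2" "K2 \<noteq> K3" "K1 \<noteq> K3"
    "incident L P (\<lambda>k x. I x k) a K1" "incident L P (\<lambda>k x. I x k) b K1"
    "incident L P (\<lambda>k x. I x k) b K2" "incident L P (\<lambda>k x. I x k) c K2"
    "incident L P (\<lambda>k x. I x k) c K3"
  then show "\<not> incident L P (\<lambda>k x. I x k) a K3" using no_triangle[of K1 K2 K3 b c a]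
    by (auto simp: incident_def)
next
  fix x k
  assume "x \<in> L" "k \<in> P" "\<not> incident L P (\<lambda>k x. I x k) x k"
  then show "\<exists>k' y. incident L P (\<lambda>k x. I x k) x k' \<and> incident L P (\<lambda>k x. I x k) y k'
      \<and> incident L P (\<lambda>k x. I x k) y k"
    using projection[of k x] by (auto simp: incident_def)
qed (simp_all add: finite_points finite_lines line_size point_degree)

context gen_quadrangle
begin

abbreviation inc where "inc \<equiv> incident P L I"
abbreviation coll where "coll \<equiv> collinear P L I"
abbreviation conc where "conc \<equiv> concurrent P L I"

lemma incident_dual: "incident L P (\<lambda>k x. I x k) k x = inc x k"
  by (auto simp: incident_def)

lemma collinear_dual: "collinear L P (\<lambda>k x. I x k) k k' = conc k k'"
  by (simp add: collinear_def concurrent_def incident_dual)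

lemma concurrent_dual: "concurrent L P (\<lambda>k x. I x k) x y = coll x y"
  by (simp add: collinear_def concurrent_def incident_dual)

text \<open>Not simp rules: their instances in the dual locale are the reverse equations.\<close>

lemmas duality = incident_dual collinear_dual concurrent_dual

lemma incident_in: "inc x k \<Longrightarrow> x \<in> P" "inc x k \<Longrightarrow> k \<in> L"
  by (simp_all add: incident_def)

lemma triangle_collapse:
  assumes "a \<noteq> b" "b \<noteq> c" "a \<noteq> c" "inc a K1" "inc b K1" "inc b K2" "inc c K2" "inc c K3" "inc a K3"
  shows "K1 = K2 \<and> K2 = K3"
proof (cases "K1 = K2")
  case True
  then show ?thesis using assms no_digon[of a c K1 K3] by auto
next
  case False
  then show ?thesis
    using assms no_digon[of a b K1 K2] no_digon[of b c K2 K1] no_triangle[of a b c K1 K2 K3] by auto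
qed

lemma unique_projection:
  assumes "\<not> inc q k" "inc y k" "inc y' k" "coll y q" "coll y' q"
  shows "y = y'"
proof (rule ccontr)
  assume "y \<noteq> y'"
  obtain K K' where "inc y K" "inc q K" "inc y' K'" "inc q K'"
    using assms(4,5) by (auto simp: collinear_def)
  moreover have "q \<noteq> y" "q \<noteq> y'" using assms(1-3) by auto
  ultimately have "k = K'" using triangle_collapse[of y y' q k K' K] \<open>y \<noteq> y'\<close> assms(2,3) by auto
  then show False using assms(1) \<open>inc q K'\<close> by simp
qed

lemma card_other_points:
  assumes "inc y k"
  shows "card {q \<in> P. I q k \<and> q \<noteq> y} = m"
proof -
  have "{q \<in> P. I q k \<and> q \<noteq> y} = {q \<in> P. I q k} - {y}" by auto
  then show ?thesis using assms line_size[of k] finite_points by (simp add: incident_def)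
qed

lemma quadrangle_completion:
  assumes "q1 \<noteq> q2" "q1 \<noteq> q4" "k1 \<noteq> k4" "k1 \<noteq> k2"
    and "inc q1 k1" "inc q2 k1" "inc q1 k4" "inc q4 k4" "inc q2 k2"
  obtains q3 k3 where "inc q3 k2" "inc q3 k3" "inc q4 k3"
    "distinct [q1, q2, q3, q4]" "distinct [k1, k2, k3, k4]"
proof -
  have "q2 \<noteq> q4" using assms no_digon[of q1 q2 k1 k4] by auto
  have not_coll: "\<not> coll q2 q4"
  proof
    assume "coll q2 q4"
    then obtain K where "inc q2 K" "inc q4 K" by (auto simp: collinear_def)
    then show False
      using triangle_collapse[of q1 q2 q4 k1 K k4] assms \<open>q2 \<noteq> q4\<close> by auto
  qed
  then have "\<not> inc q4 k2" using assms(9) by (auto simp: collinear_def)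
  then obtain k3 q3 where q3: "inc q4 k3" "inc q3 k3" "inc q3 k2"
    using projection[of q4 k2] assms(8,9) incident_in by blast
  have "q3 \<noteq> q2" "k3 \<noteq> k1" using not_coll q3 assms(6) by (auto simp: collinear_def)
  moreover have "q3 \<noteq> q1" "k2 \<noteq> k4"
    using assms no_digon[of q1 q2 k1 k2] no_digon[of q1 q2 k1 k4] q3 by auto
  moreover have "k3 \<noteq> k4"
    using triangle_collapse[of q1 q2 q3 k1 k2 k4] assms q3 \<open>q3 \<noteq> q2\<close> \<open>q3 \<noteq> q1\<close> by auto
  ultimately show thesis
    using that[OF q3(3,2,1)] assms \<open>q2 \<noteq> q4\<close> \<open>\<not> inc q4 k2\<close> q3 by auto
qed

lemma common_projection_line_misses:
  assumes "inc y l" "\<not> inc w l" "\<not> inc y K" "coll y u" "coll y w"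
    and "inc u K" "inc v K" "inc v K'" "inc w K'" "u \<noteq> v"
  shows "\<not> conc l K'"
proof
  assume "conc l K'"
  then obtain z where z: "inc z l" "inc z K'" by (auto simp: concurrent_def)
  then have "coll z w" using assms(9) by (auto simp: collinear_def)
  then have "z = y" using unique_projection[of w l z y] assms(1,2,5) z(1) by blast
  then have "coll v y" using z(2) assms(8) by (auto simp: collinear_def)
  then show False
    using unique_projection[of y K u v] assms(3,4,6,7,10) collinear_sym by metis
qed

end

context gen_quadrangle
begin

lemma unique_concurrent_line:
  assumes "\<not> inc x k" "inc x M" "inc x M'" "conc M k" "conc M' k"
  shows "M = M'"
  using dual.unique_projection[of k x M M'] assms by (simp add: duality)

end

section \<open>Points opposite a flag\<close>

lemma obtain_two_distinct:
  assumes "2 \<le> card A"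
  obtains a b where "a \<in> A" "b \<in> A" "a \<noteq> b"
proof -
  obtain B where "B \<subseteq> A" "card B = 2" using obtain_subset_with_card_n[OF assms] by blast
  then show thesis using that by (auto simp: card_2_iff)
qed

text \<open>For S a set of points of l other than p, these are the points opposite p whose
  projection onto l lies in S.\<close>

definition opposite_shadow :: "'p set \<Rightarrow> 'l set \<Rightarrow> ('p \<Rightarrow> 'l \<Rightarrow> bool) \<Rightarrow> 'p \<Rightarrow> 'p set \<Rightarrow> 'p set" where
  "opposite_shadow P L I p S = {q \<in> P. \<not> collinear P L I p q \<and> (\<exists>y\<in>S. collinear P L I y q)}"

lemma opposite_shadow_mono: "S \<subseteq> S' \<Longrightarrow> opposite_shadow P L I p S \<subseteq> opposite_shadow P L I p S'"
  by (auto simp: opposite_shadow_def)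

locale gen_quadrangle_flag = gen_quadrangle +
  fixes p l
  assumes flag: "incident P L I p l"

sublocale gen_quadrangle_flag \<subseteq> dual: gen_quadrangle_flag L P "\<lambda>k x. I x k" n m l p
  by unfold_locales (use flag in \<open>simp add: incident_def\<close>)

context gen_quadrangle_flag
begin

lemma opposite_off_flag_line: "\<not> coll p q \<Longrightarrow> \<not> inc q l"
  using flag by (auto simp: collinear_def)

lemma flag_line_projection:
  assumes "q \<in> P" "\<not> coll p q"
  obtains y where "inc y l" "y \<noteq> p" "coll y q"
proof -
  obtain k y where "inc q k" "inc y k" "inc y l"
    using projection[of q l] assms opposite_off_flag_line flag incident_in by blast
  then show thesis using that assms(2) by (auto simp: collinear_def)
qed

lemma opposite_point_on_line:
  assumes "k \<in> L" "\<not> conc l k" "inc y l" "y \<noteq> p"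
  obtains q where "inc q k" "coll y q" "\<not> coll p q"
proof -
  have "\<not> inc y k" using assms(2,3) by (auto simp: concurrent_def)
  then obtain k' q where q: "inc y k'" "inc q k'" "inc q k"
    using projection[of y k] assms(1,3) incident_in by blast
  have "\<not> coll p q"
  proof
    assume "coll p q"
    then obtain N where "inc p N" "inc q N" by (auto simp: collinear_def)
    moreover have "q \<noteq> p" "q \<noteq> y"
      using assms(2) flag q(3) \<open>\<not> inc y k\<close> by (auto simp: concurrent_def)
    ultimately have "l = k'" using triangle_collapse[of p y q l k' N] flag assms(3,4) q by auto
    then show False using assms(2) q(2,3) by (auto simp: concurrent_def)
  qed
  then show thesis using that q by (auto simp: collinear_def)
qed

lemma opposite_shadow_singleton:
  assumes "inc y l" "y \<noteq> p"
  shows "opposite_shadow P L I p {y} = (\<Union>K \<in> {K \<in> L. I y K \<and> K \<noteq> l}. {q \<in> P. I q K \<and> q \<noteq> y})"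
proof (intro equalityI subsetI)
  fix q
  assume "q \<in> opposite_shadow P L I p {y}"
  then have q: "\<not> coll p q" "coll y q" by (auto simp: opposite_shadow_def)
  then obtain K where K: "inc y K" "inc q K" by (auto simp: collinear_def)
  moreover have "q \<noteq> y" "K \<noteq> l"
    using q(1) assms(1) flag K(2) by (auto simp: collinear_def)
  ultimately show "q \<in> (\<Union>K \<in> {K \<in> L. I y K \<and> K \<noteq> l}. {q \<in> P. I q K \<and> q \<noteq> y})"
    unfolding incident_def by blast
next
  fix q
  assume "q \<in> (\<Union>K \<in> {K \<in> L. I y K \<and> K \<noteq> l}. {q \<in> P. I q K \<and> q \<noteq> y})"
  then obtain K where K: "inc y K" "inc q K" "K \<noteq> l" "q \<noteq> y"
    using assms(1) by (auto simp: incident_def)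
  have "\<not> coll p q"
  proof
    assume "coll p q"
    then obtain N where "inc p N" "inc q N" by (auto simp: collinear_def)
    moreover have "q \<noteq> p" using no_digon[of p y l K] flag assms K by auto
    ultimately show False using triangle_collapse[of p y q l K N] flag assms K by auto
  qed
  then show "q \<in> opposite_shadow P L I p {y}"
    using K unfolding opposite_shadow_def collinear_def incident_def by blast
qed

lemma flag_line_others: "{y. inc y l \<and> y \<noteq> p} = {y \<in> P. I y l \<and> y \<noteq> p}"
  using flag by (auto simp: incident_def)

lemma finite_flag_line_others: "finite {y. inc y l \<and> y \<noteq> p}"
  using finite_points by (simp add: flag_line_others)

lemma card_flag_line_others: "card {y. inc y l \<and> y \<noteq> p} = m"
  using card_other_points[OF flag] by (simp add: flag_line_others)

lemma two_points_on_flag_line: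
  assumes "2 \<le> m"
  obtains y1 y2 where "inc y1 l" "y1 \<noteq> p" "inc y2 l" "y2 \<noteq> p" "y1 \<noteq> y2"
proof -
  have "2 \<le> card {y. inc y l \<and> y \<noteq> p}" using assms card_flag_line_others by simp
  then obtain y1 y2 where "y1 \<in> {y. inc y l \<and> y \<noteq> p}" "y2 \<in> {y. inc y l \<and> y \<noteq> p}" "y1 \<noteq> y2"
    by (rule obtain_two_distinct)
  then show thesis using that by blast
qed

lemma card_opposite_shadow_singleton:
  assumes "inc y l" "y \<noteq> p"
  shows "card (opposite_shadow P L I p {y}) = n * m"
proof -
  let ?K = "{K \<in> L. I y K \<and> K \<noteq> l}"
  have "card (\<Union>K \<in> ?K. {q \<in> P. I q K \<and> q \<noteq> y}) = (\<Sum>K \<in> ?K. card {q \<in> P. I q K \<and> q \<noteq> y})"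
  proof (rule card_UN_disjoint)
    show "\<forall>K\<in>?K. \<forall>K'\<in>?K. K \<noteq> K' \<longrightarrow> {q \<in> P. I q K \<and> q \<noteq> y} \<inter> {q \<in> P. I q K' \<and> q \<noteq> y} = {}"
    proof (intro ballI impI)
      fix K K'
      assume "K \<in> ?K" "K' \<in> ?K" "K \<noteq> K'"
      then show "{q \<in> P. I q K \<and> q \<noteq> y} \<inter> {q \<in> P. I q K' \<and> q \<noteq> y} = {}"
        using no_digon[of y _ K K'] assms(1) by (auto simp: incident_def)
    qed
  qed (simp_all add: finite_points finite_lines)
  also have "\<dots> = (\<Sum>K \<in> ?K. m)"
  proof (rule sum.cong)
    fix K
    assume "K \<in> ?K"
    then have "inc y K" using assms(1) by (simp add: incident_def)
    then show "card {q \<in> P. I q K \<and> q \<noteq> y} = m" by (rule card_other_points)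
  qed simp
  also have "\<dots> = n * m"
    using dual.card_other_points[of l y] assms(1) by (simp add: duality)
  finally show ?thesis using opposite_shadow_singleton[OF assms] by simp
qed

lemma card_opposite_shadow_filter:
  assumes "S \<subseteq> {y. inc y l \<and> y \<noteq> p}"
  shows "card {q \<in> opposite_shadow P L I p S. Q q}
    = (\<Sum>y\<in>S. card {q \<in> opposite_shadow P L I p {y}. Q q})"
proof -
  have same_projection: "y = y'"
    if "q \<in> opposite_shadow P L I p {y}" "q \<in> opposite_shadow P L I p {y'}" "y \<in> S" "y' \<in> S"
    for q y y'
  proof -
    have "\<not> inc q l" using that(1) opposite_off_flag_line by (simp add: opposite_shadow_def)
    then show ?thesis
      using unique_projection[of q l y y'] that assms by (auto simp: opposite_shadow_def)
  qed
  have "card (\<Union>y\<in>S. {q \<in> opposite_shadow P L I p {y}. Q q})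
      = (\<Sum>y\<in>S. card {q \<in> opposite_shadow P L I p {y}. Q q})"
  proof (rule card_UN_disjoint)
    show "finite S" using finite_subset[OF assms finite_flag_line_others] .
    show "\<forall>y\<in>S. finite {q \<in> opposite_shadow P L I p {y}. Q q}"
      using finite_points by (auto simp: opposite_shadow_def)
  qed (use same_projection in blast)
  moreover have "{q \<in> opposite_shadow P L I p S. Q q}
      = (\<Union>y\<in>S. {q \<in> opposite_shadow P L I p {y}. Q q})"
    by (auto simp: opposite_shadow_def)
  ultimately show ?thesis by simp
qed

lemma card_opposite_shadow:
  assumes "S \<subseteq> {y. inc y l \<and> y \<noteq> p}"
  shows "card (opposite_shadow P L I p S) = card S * (n * m)"
proof -
  have "card (opposite_shadow P L I p S) = (\<Sum>y\<in>S. card (opposite_shadow P L I p {y}))"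
    using card_opposite_shadow_filter[OF assms, of "\<lambda>_. True"] by simp
  also have "\<dots> = (\<Sum>y\<in>S. n * m)"
    using assms by (intro sum.cong) (auto simp: card_opposite_shadow_singleton)
  finally show ?thesis by simp
qed

lemma card_opposite_shadow_singleton_on_line:
  assumes "k \<in> L" "\<not> conc l k" "inc y l" "y \<noteq> p"
  shows "card {q \<in> opposite_shadow P L I p {y}. I q k} = 1"
proof -
  have "\<not> inc y k" using assms(2,3) by (auto simp: concurrent_def)
  obtain q where q: "inc q k" "coll y q" "\<not> coll p q"
    using opposite_point_on_line assms by blast
  have "{q' \<in> opposite_shadow P L I p {y}. I q' k} = {q}"
  proof (intro equalityI subsetI)
    fix q'
    assume "q' \<in> {q' \<in> opposite_shadow P L I p {y}. I q' k}"
    then have "inc q' k" "coll q' y"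
      using assms(1) by (auto simp: opposite_shadow_def incident_def collinear_sym)
    then show "q' \<in> {q}"
      using unique_projection[of y k q' q] q \<open>\<not> inc y k\<close> by (simp add: collinear_sym)
  next
    fix q'
    assume "q' \<in> {q}"
    then show "q' \<in> {q' \<in> opposite_shadow P L I p {y}. I q' k}"
      using q by (simp add: opposite_shadow_def incident_def)
  qed
  then show ?thesis by simp
qed

lemma card_opposite_shadow_on_line:
  assumes "k \<in> L" "\<not> conc l k" "S \<subseteq> {y. inc y l \<and> y \<noteq> p}"
  shows "card {q \<in> opposite_shadow P L I p S. I q k} = card S"
proof -
  have "card {q \<in> opposite_shadow P L I p S. I q k}
      = (\<Sum>y\<in>S. card {q \<in> opposite_shadow P L I p {y}. I q k})"
    by (rule card_opposite_shadow_filter[OF assms(3)])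
  also have "\<dots> = (\<Sum>y\<in>S. 1)"
    using assms by (intro sum.cong) (auto simp: card_opposite_shadow_singleton_on_line)
  finally show ?thesis by simp
qed

end

context gen_quadrangle_flag
begin

lemma missing_line_off_flag_point: "\<not> conc l k \<Longrightarrow> \<not> inc p k"
  using flag by (auto simp: concurrent_def)

lemma flag_point_projection:
  assumes "k \<in> L" "\<not> conc l k"
  obtains M where "inc p M" "M \<noteq> l" "conc M k"
  using dual.flag_line_projection[of k] assms by (auto simp: duality)

lemma line_through_opposite_point:
  assumes "q \<in> P" "\<not> coll p q" "inc p M" "M \<noteq> l"
  obtains k where "inc q k" "conc M k" "\<not> conc l k"
  using dual.opposite_point_on_line[of q M] assms by (auto simp: duality)

lemma closing_quadrangle_stays_opposite:
  assumes "inc y l" "inc p M" "\<not> coll p q4" "\<not> conc l k2"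
    and "coll y q2" "coll y q4" "conc M k2" "conc M k4"
    and "inc q2 k2" "inc q3 k2" "inc q3 k3" "inc q4 k3" "inc q4 k4" "q2 \<noteq> q3" "k3 \<noteq> k4"
  shows "\<not> coll p q3 \<and> \<not> conc l k3"
proof
  have "\<not> inc q4 M" using assms(2,3) by (auto simp: collinear_def)
  then show "\<not> coll p q3"
    using dual.common_projection_line_misses[of M p k2 q4 k4 k3 q3] assms(2,7-13,15)
      missing_line_off_flag_point[OF assms(4)] by (auto simp: duality)
next
  have "\<not> inc y k2" using assms(1,4) by (auto simp: concurrent_def)
  then show "\<not> conc l k3"
    using common_projection_line_misses[of y l q4 k2 q2 q3 k3] assms(1,5,6,9-12,14)
      opposite_off_flag_line[OF assms(3)] by blast
qed

lemma opposite_quadrangle: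
  assumes "2 \<le> m" "2 \<le> n"
  obtains q1 q2 q3 q4 k1 k2 k3 k4 Y T where
    "Y \<subseteq> {y. inc y l \<and> y \<noteq> p}" "card Y \<le> 3" "T \<subseteq> {M. inc p M \<and> M \<noteq> l}" "card T \<le> 3"
    "{q1, q2, q3, q4} \<subseteq> opposite_shadow P L I p Y"
    "{k1, k2, k3, k4} \<subseteq> opposite_shadow L P (\<lambda>k x. I x k) l T"
    "distinct [q1, q2, q3, q4]" "distinct [k1, k2, k3, k4]"
    "I q1 k1" "I q2 k1" "I q2 k2" "I q3 k2" "I q3 k3" "I q4 k3" "I q4 k4" "I q1 k4"
proof -
  obtain y1 y2 where y: "inc y1 l" "y1 \<noteq> p" "inc y2 l" "y2 \<noteq> p" "y1 \<noteq> y2"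
    using two_points_on_flag_line[OF assms(1)] .
  obtain M1 M2 where M: "inc p M1" "M1 \<noteq> l" "inc p M2" "M2 \<noteq> l" "M1 \<noteq> M2"
    using dual.two_points_on_flag_line[OF assms(2)] by (auto simp: duality)
  have "opposite_shadow P L I p {y1} \<noteq> {}"
    using card_opposite_shadow_singleton[OF y(1,2)] assms by (intro notI) simp
  then obtain q1 where q1: "q1 \<in> P" "\<not> coll p q1" "coll y1 q1"
    by (auto simp: opposite_shadow_def)
  obtain k1 where k1: "inc q1 k1" "conc M1 k1" "\<not> conc l k1"
    using line_through_opposite_point[OF q1(1,2) M(1,2)] .
  obtain k4 where k4: "inc q1 k4" "conc M2 k4" "\<not> conc l k4"
    using line_through_opposite_point[OF q1(1,2) M(3,4)] .
  obtain q2 where q2: "inc q2 k1" "coll y2 q2" "\<not> coll p q2"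
    using opposite_point_on_line[OF incident_in(2)[OF k1(1)] k1(3) y(3,4)] .
  obtain q4 where q4: "inc q4 k4" "coll y2 q4" "\<not> coll p q4"
    using opposite_point_on_line[OF incident_in(2)[OF k4(1)] k4(3) y(3,4)] .
  obtain k2 where k2: "inc q2 k2" "conc M2 k2" "\<not> conc l k2"
    using line_through_opposite_point[OF incident_in(1)[OF q2(1)] q2(3) M(3,4)] .
  have "q1 \<noteq> q2" "q1 \<noteq> q4"
    using unique_projection[OF opposite_off_flag_line[OF q1(2)] y(1,3) q1(3)] q2(2) q4(2) y(5)
    by auto
  moreover have "k1 \<noteq> k4" "k1 \<noteq> k2"
    using unique_concurrent_line[OF missing_line_off_flag_point[OF k1(3)] M(1,3) k1(2)] k4(2)
      k2(2) M(5) by auto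
  ultimately obtain q3 k3 where q3: "inc q3 k2" "inc q3 k3" "inc q4 k3"
    and distinct: "distinct [q1, q2, q3, q4]" "distinct [k1, k2, k3, k4]"
    using quadrangle_completion[of q1 q2 q4 k1 k4 k2] q2(1) k1(1) k4(1) q4(1) k2(1) by blast
  have opposite: "\<not> coll p q3 \<and> \<not> conc l k3"
    using closing_quadrangle_stays_opposite[of y2 M2 q4 k2 q2 k4 q3 k3] y(3) M(3) q2(2) q4
      k2 k4(2) q3 distinct by auto
  obtain y3 where y3: "inc y3 l" "y3 \<noteq> p" "coll y3 q3"
    using flag_line_projection[OF incident_in(1)[OF q3(1)] conjunct1[OF opposite]] .
  obtain M3 where M3: "inc p M3" "M3 \<noteq> l" "conc M3 k3"
    using flag_point_projection[OF incident_in(2)[OF q3(2)] conjunct2[OF opposite]] .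
  have "{y1, y2, y3} \<subseteq> {y. inc y l \<and> y \<noteq> p}" "card {y1, y2, y3} \<le> 3"
    "{M1, M2, M3} \<subseteq> {M. inc p M \<and> M \<noteq> l}" "card {M1, M2, M3} \<le> 3"
    using y M y3 M3 by (auto simp: card_insert_if)
  moreover have "{q1, q2, q3, q4} \<subseteq> opposite_shadow P L I p {y1, y2, y3}"
    using q1 q2(2,3) q4(2,3) y3(3) opposite incident_in(1)[OF q2(1)] incident_in(1)[OF q3(1)]
      incident_in(1)[OF q4(1)] by (auto simp: opposite_shadow_def)
  moreover have "{k1, k2, k3, k4} \<subseteq> opposite_shadow L P (\<lambda>k x. I x k) l {M1, M2, M3}"
    using k1(2,3) k2(2,3) k4(2,3) M3(3) opposite incident_in(2)[OF k1(1)] incident_in(2)[OF k2(1)]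
      incident_in(2)[OF q3(2)] incident_in(2)[OF k4(1)] by (auto simp: opposite_shadow_def duality)
  moreover note distinct
  moreover have "I q1 k1" "I q2 k1" "I q2 k2" "I q3 k2" "I q3 k3" "I q4 k3" "I q4 k4" "I q1 k4"
    using k1(1) q2(1) k2(1) q3 q4(1) k4(1) by (simp_all add: incident_def)
  ultimately show thesis by (rule that)
qed

lemma opposite_shadows_bipartite_biregular:
  assumes girth: "\<forall>xs. is_cycle (levi_vertices P L) (levi_adj P L I) xs \<longrightarrow> 8 \<le> length xs"
    and "3 \<le> a" "a \<le> m" "3 \<le> b" "b \<le> n"
  shows "\<exists>A B. bipartite_biregular (levi_vertices A B) (levi_adj A B I) a b 8
    \<and> card (levi_vertices A B) = (a + b) * m * n"
proof -
  have "2 \<le> m" "2 \<le> n" using assms(2-5) by simp_all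
  then obtain q1 q2 q3 q4 k1 k2 k3 k4 Y T0 where
    Y: "Y \<subseteq> {y. inc y l \<and> y \<noteq> p}" "card Y \<le> 3" and
    T0: "T0 \<subseteq> {M. inc p M \<and> M \<noteq> l}" "card T0 \<le> 3" and
    quad: "{q1, q2, q3, q4} \<subseteq> opposite_shadow P L I p Y"
      "{k1, k2, k3, k4} \<subseteq> opposite_shadow L P (\<lambda>k x. I x k) l T0"
      "distinct [q1, q2, q3, q4]" "distinct [k1, k2, k3, k4]"
      "I q1 k1" "I q2 k1" "I q2 k2" "I q3 k2" "I q3 k3" "I q4 k3" "I q4 k4" "I q1 k4"
    by (rule opposite_quadrangle)
  have "card Y \<le> a" "a \<le> card {y. inc y l \<and> y \<noteq> p}"
    using Y(2) assms(2,3) card_flag_line_others by simp_all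
  then obtain S where S: "Y \<subseteq> S" "S \<subseteq> {y. inc y l \<and> y \<noteq> p}" "card S = a"
    using exists_subset_between[OF _ _ Y(1) finite_flag_line_others] by blast
  have "finite {M. inc p M \<and> M \<noteq> l}" "card {M. inc p M \<and> M \<noteq> l} = n"
    using dual.finite_flag_line_others dual.card_flag_line_others by (simp_all add: duality)
  moreover have "card T0 \<le> b" using T0(2) assms(4) by simp
  ultimately obtain T where T: "T0 \<subseteq> T" "T \<subseteq> {M. inc p M \<and> M \<noteq> l}" "card T = b"
    using exists_subset_between[OF _ _ T0(1)] assms(5) by metis
  define A where "A = opposite_shadow P L I p S"
  define B where "B = opposite_shadow L P (\<lambda>k x. I x k) l T"
  have AP: "A \<subseteq> P" and BL: "B \<subseteq> L" by (auto simp: A_def B_def opposite_shadow_def)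
  have fin: "finite A" "finite B"
    using finite_subset[OF AP finite_points] finite_subset[OF BL finite_lines] .
  have deg_lines: "card {q \<in> A. I q k} = a" if "k \<in> B" for k
    using that card_opposite_shadow_on_line[of k S] S(2,3)
    by (simp add: A_def B_def opposite_shadow_def duality)
  have deg_points: "card {k \<in> B. I q k} = b" if "q \<in> A" for q
    using that dual.card_opposite_shadow_on_line[of q T] T(2,3)
    by (simp add: A_def B_def opposite_shadow_def duality)
  have girth_8: "has_girth (levi_vertices A B) (levi_adj A B I) 8"
  proof (rule levi_subgeometry_girth_8[OF girth AP BL quad(3,4) _ _ quad(5-)])
    show "{q1, q2, q3, q4} \<subseteq> A" "{k1, k2, k3, k4} \<subseteq> B"
      using quad(1,2) opposite_shadow_mono[OF S(1), of P L I p]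
        opposite_shadow_mono[OF T(1), of L P "\<lambda>k x. I x k" l]
      unfolding A_def B_def by blast+
  qed
  have "bipartite_biregular (levi_vertices A B) (levi_adj A B I) a b 8"
    using assms(2,4) deg_lines deg_points
    by (intro levi_bipartite_biregular[OF fin _ _ _ _ girth_8]) simp_all
  moreover have "card (levi_vertices A B) = (a + b) * m * n"
    using card_levi_vertices[OF fin] card_opposite_shadow[OF S(2)] S(3)
      dual.card_opposite_shadow[of T] T(2,3)
    by (simp add: A_def B_def duality algebra_simps)
  ultimately show ?thesis by blast
qed

end

lemma generalized_quadrangle_obtain_flag:
  assumes "generalized_quadrangle P L I"
  obtains p l where "incident P L I p l"
proof -
  obtain xs where "is_cycle (levi_vertices P L) (levi_adj P L I) xs"
    using assms by (auto simp: generalized_quadrangle_def has_girth_def)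
  then have "levi_adj P L I (xs ! 0) (xs ! 1)" by (simp add: is_cycle_def is_walk_def)
  then show thesis using that by (auto simp: incident_def elim: levi_adj.elims)
qed

theorem mainTheorem5:
  fixes P :: "'p set" and L :: "'l set" and I :: "'p \<Rightarrow> 'l \<Rightarrow> bool"
    and m n m1 n1 :: nat
  assumes "4 \<le> m" and "m \<le> n"
    and "gq_order P L I m n"
    and "3 \<le> m1" and "m1 \<le> m" and "m1 \<le> n1" and "n1 \<le> n"
  shows "\<exists>(V :: nat set) E. bipartite_biregular V E m1 n1 8 \<and> card V = (m1 + n1) * m * n"
proof -
  interpret gen_quadrangle P L I m n
    using assms(3) by (rule gq_order_imp_gen_quadrangle)
  have gq: "generalized_quadrangle P L I" using assms(3) by (simp add: gq_order_def)
  then obtain p l where "incident P L I p l" by (rule generalized_quadrangle_obtain_flag)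
  then interpret gen_quadrangle_flag P L I m n p l by unfold_locales
  have girth: "\<forall>xs. is_cycle (levi_vertices P L) (levi_adj P L I) xs \<longrightarrow> 8 \<le> length xs"
    using gq by (simp add: generalized_quadrangle_def has_girth_def)
  have "3 \<le> n1" using assms(4,6) by simp
  then obtain A B where bb: "bipartite_biregular (levi_vertices A B) (levi_adj A B I) m1 n1 8"
      and card: "card (levi_vertices A B) = (m1 + n1) * m * n"
    using opposite_shadows_bipartite_biregular[OF girth assms(4,5) _ assms(7)] by blast
  show ?thesis using bipartite_biregular_nat_copy[OF bb] by (simp only: card)
qed

end
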